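(* Let $\mathcal{A}$ be a $C^*$-algebra (a Hilbert module over itself with $\langle a,b\rangle=a^*b$), $\mathcal{M}$ a Hilbert $C^*$-module over $\mathcal{A}$, and $F:\mathcal{M}\to\mathcal{A}$ a bounded adjointable operator which is not $\mathcal{A}$-compact. Let $K>0$. Then there exists $\delta>0$ such that for every $z\in\mathcal{A}$ there exists $x\in\mathcal{M}$ with $\|x\|\le1$ such that $\|z\alpha-F(x)\|>\delta$ for every $\alpha\in\mathcal{A}$ with $\|\alpha\|\le K$. In particular $\|F(x)\|>\delta$.
   Context: For $x\in\mathcal{N}$, $y\in\mathcal{M}$, $\theta_{x,y}(z)=x\langle y,z\rangle$; an operator $\mathcal{M}\to\mathcal{N}$ is $\mathcal{A}$-compact if it lies in the norm closure of the linear span of all such $\theta_{x,y}$. *)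

theory Defs
  imports "HOL-Analysis.Analysis"
begin

text \<open>HOL has no complex vector spaces, so complex scalar multiplication is an
explicit parameter extending the real scaling of the normed type.\<close>

definition complex_scaling :: "(complex \<Rightarrow> 'v::real_normed_vector \<Rightarrow> 'v) \<Rightarrow> bool" where
  "complex_scaling sc \<longleftrightarrow>
     (\<forall>c d v. sc (c + d) v = sc c v + sc d v) \<and>
     (\<forall>c v w. sc c (v + w) = sc c v + sc c w) \<and>
     (\<forall>c d v. sc (c * d) v = sc c (sc d v)) \<and>
     (\<forall>r v. sc (complex_of_real r) v = r *\<^sub>R v) \<and>
     (\<forall>c v. norm (sc c v) = cmod c * norm v)"

definition cstar_algebra ::
  "(complex \<Rightarrow> 'a::{real_normed_algebra,banach} \<Rightarrow> 'a) \<Rightarrow> ('a \<Rightarrow> 'a) \<Rightarrow> bool" where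
  "cstar_algebra scA st \<longleftrightarrow>
     complex_scaling scA \<and>
     (\<forall>c a b. scA c (a * b) = scA c a * b \<and> scA c (a * b) = a * scA c b) \<and>
     (\<forall>a b. st (a + b) = st a + st b) \<and>
     (\<forall>c a. st (scA c a) = scA (cnj c) (st a)) \<and>
     (\<forall>a. st (st a) = a) \<and>
     (\<forall>a b. st (a * b) = st b * st a) \<and>
     (\<forall>a. norm (st a * a) = (norm a)\<^sup>2)"

definition cstar_positive :: "('a::times \<Rightarrow> 'a) \<Rightarrow> 'a \<Rightarrow> bool" where
  "cstar_positive st a \<longleftrightarrow> (\<exists>b. a = st b * b)"

definition hilbert_cstar_module ::
  "(complex \<Rightarrow> 'a::{real_normed_algebra,banach} \<Rightarrow> 'a) \<Rightarrow> ('a \<Rightarrow> 'a) \<Rightarrow>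
   (complex \<Rightarrow> 'm::{real_normed_vector,banach} \<Rightarrow> 'm) \<Rightarrow> ('m \<Rightarrow> 'a \<Rightarrow> 'm) \<Rightarrow>
   ('m \<Rightarrow> 'm \<Rightarrow> 'a) \<Rightarrow> bool" where
  "hilbert_cstar_module scA st scM act ip \<longleftrightarrow>
     cstar_algebra scA st \<and> complex_scaling scM \<and>
     (\<forall>x y a. act (x + y) a = act x a + act y a) \<and>
     (\<forall>x a b. act x (a + b) = act x a + act x b) \<and>
     (\<forall>x a b. act x (a * b) = act (act x a) b) \<and>
     (\<forall>c x a. scM c (act x a) = act (scM c x) a \<and> scM c (act x a) = act x (scA c a)) \<and>
     (\<forall>x y z. ip x (y + z) = ip x y + ip x z) \<and>
     (\<forall>c x y. ip x (scM c y) = scA c (ip x y)) \<and>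
     (\<forall>x y a. ip x (act y a) = ip x y * a) \<and>
     (\<forall>x y. ip y x = st (ip x y)) \<and>
     (\<forall>x. cstar_positive st (ip x x)) \<and>
     (\<forall>x. ip x x = 0 \<longrightarrow> x = 0) \<and>
     (\<forall>x. norm x = sqrt (norm (ip x x)))"

definition alg_ip :: "('a::times \<Rightarrow> 'a) \<Rightarrow> 'a \<Rightarrow> 'a \<Rightarrow> 'a" where
  "alg_ip st a b = st a * b"

definition adjointable_to_alg ::
  "('a \<Rightarrow> 'a) \<Rightarrow> ('m \<Rightarrow> 'm \<Rightarrow> 'a::times) \<Rightarrow> ('m \<Rightarrow> 'a) \<Rightarrow> bool" where
  "adjointable_to_alg st ip F \<longleftrightarrow> (\<exists>G. \<forall>x a. alg_ip st (F x) a = ip x (G a))"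

definition theta :: "('m \<Rightarrow> 'm \<Rightarrow> 'a::times) \<Rightarrow> 'a \<Rightarrow> 'm \<Rightarrow> 'm \<Rightarrow> 'a" where
  "theta ip a y z = a * ip y z"

definition A_compact ::
  "(complex \<Rightarrow> 'a::{real_normed_algebra} \<Rightarrow> 'a) \<Rightarrow> ('m::real_normed_vector \<Rightarrow> 'm \<Rightarrow> 'a) \<Rightarrow>
   ('m \<Rightarrow> 'a) \<Rightarrow> bool" where
  "A_compact scA ip F \<longleftrightarrow>
     (\<forall>e>0. \<exists>n::nat. \<exists>c a y.
        onorm (\<lambda>z. F z - (\<Sum>i<n. scA (c i) (theta ip (a i) (y i) z))) < e)"

end

theory Submission
  imports Defs
begin

text \<open>Suppose the conclusion fails for \<open>\<delta>\<close>. Then for some \<open>z\<close> every \<open>F x\<close> with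
  \<open>\<parallel>x\<parallel> \<le> 1\<close> lies within \<open>\<delta>\<close> of some \<open>z \<alpha>\<close> with \<open>\<parallel>\<alpha>\<parallel> \<le> K\<close> (if \<open>\<parallel>F x\<parallel> \<le> \<delta>\<close>, take
  \<open>\<alpha> = 0\<close>). Let \<open>1 + b z\<^sup>*\<close> be an approximate left unit for \<open>z\<close>, i.e. a contraction with
  \<open>\<parallel>z + b z\<^sup>* z\<parallel> \<le> \<epsilon>\<close>. Then \<open>\<parallel>F x + b z\<^sup>* F x\<parallel> \<le> \<delta> + \<epsilon> K\<close>, and with the adjoint \<open>G\<close> of
  \<open>F\<close> we have \<open>b z\<^sup>* F x = b \<langle>G z, x\<rangle>\<close>, so \<open>F\<close> lies within \<open>\<delta> + \<epsilon> K\<close> of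
  \<open>\<theta>\<^bsub>-b,G z\<^esub>\<close>. Since \<open>\<delta>\<close> and \<open>\<epsilon>\<close> are arbitrary, \<open>F\<close> is \<open>\<A>\<close>-compact.

  The approximate unit is built without functional calculus. The element
  \<open>a = i z z\<^sup>* / (2\<parallel>z z\<^sup>*\<parallel>)\<close> is skew-adjoint, so its Cayley transform
  \<open>u = (1 - a)\<^sup>-\<^sup>1 (1 + a)\<close> is unitary. The Cesaro means of the powers \<open>u\<^sup>j\<close> are
  contractions that converge to the identity on the range of \<open>u - 1\<close>, and this range
  contains \<open>a\<^sup>2\<close>. Applying the C*-identity twice carries the estimate from \<open>(z z\<^sup>*)\<^sup>2\<close>
  over to \<open>z\<close>.\<close>

section \<open>Affine fixed points and the Cayley transform\<close>

lemma affine_fixpoint_ex1: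
  fixes a c :: "'a::{real_normed_algebra,banach}"
  assumes "norm a < 1"
  shows "\<exists>!X. X = c + a * X"
proof -
  have "dist (c + a * x) (c + a * y) \<le> norm a * dist x y" for x y
    using norm_mult_ineq[of a "x - y"] by (simp add: dist_norm algebra_simps)
  then show ?thesis
    using banach_fix_type[of "norm a" "\<lambda>X. c + a * X"] assms by (simp add: eq_commute)
qed

lemma affine_fixpoint_commute:
  fixes a c U :: "'a::{real_normed_algebra,banach}"
  assumes "norm a < 1" and "c * a = a * c" and U: "U = c + a * U"
  shows "U * a = a * U"
proof -
  have "U * a = c * a + a * (U * a)"
    by (subst U) (simp add: distrib_right mult.assoc)
  moreover have "a * U = c * a + a * (a * U)"
    by (subst U) (simp add: distrib_left assms(2))
  ultimately show ?thesis
    using affine_fixpoint_ex1[OF assms(1), of "c * a"] by blast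
qed

text \<open>The algebra need not be unital, so an element \<open>1 + X\<close> of its unitization is
  encoded by \<open>X\<close>. The solution \<open>U\<close> of \<open>U = 2a + a U\<close> encodes the Cayley transform
  \<open>(1 - a)\<^sup>-\<^sup>1 (1 + a)\<close>, and \<open>V + U + V U\<close> encodes \<open>(1 + V) (1 + U)\<close>.\<close>

lemma cayley_product_identity:
  fixes a U V :: "'r::ring"
  assumes "U = (a + a) + a * U" and "V = - (a + a) - a * V"
  shows "a * (V + U + V * U) = - (V + U + V * U)"
proof -
  have aU: "a * U = U - (a + a)" and aV: "a * V = - (a + a) - V"
    using assms by (simp_all add: algebra_simps)
  have "a * (V + U + V * U) = a * V + a * U + (a * V) * U"
    by (simp add: distrib_left mult.assoc)
  also have "\<dots> = - (a + a) - V + U - (a + a) - (a * U + a * U) - V * U"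
    by (simp add: aU aV algebra_simps)
  also have "\<dots> = - (V + U + V * U)"
    by (simp add: aU algebra_simps)
  finally show ?thesis .
qed

text \<open>\<open>(1 - a) (1 + U) = 1 + a\<close>, so \<open>2a = U (1 - a)\<close> lies in the range of \<open>U\<close>.\<close>

lemma cayley_range:
  fixes a U :: "'a::{real_normed_algebra,banach}"
  assumes "norm a < 1" and U: "U = (a + a) + a * U"
  shows "(a + a) * w = U * (w - a * w)"
proof -
  have Ua: "U * a = a * U"
    by (rule affine_fixpoint_commute[OF assms(1) _ U]) (simp add: algebra_simps)
  have "U * (w - a * w) = (U - a * U) * w"
    by (simp add: right_diff_distrib left_diff_distrib Ua mult.assoc[symmetric])
  also have "U - a * U = a + a"
    unfolding diff_eq_eq by (fact U)
  finally show ?thesis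
    by (rule sym)
qed

section \<open>Cesaro means of powers\<close>

text \<open>\<open>qpow U j\<close> encodes \<open>(1 + U)\<^sup>j\<close>, and \<open>qmean U n\<close> the mean of its first \<open>n\<close> powers.\<close>

primrec qpow :: "'a::semiring_0 \<Rightarrow> nat \<Rightarrow> 'a" where
  "qpow U 0 = 0"
| "qpow U (Suc j) = U + qpow U j + U * qpow U j"

lemma qpow_commute: "qpow U j * U = U * qpow U j"
  by (induction j) (simp_all add: distrib_left distrib_right mult.assoc)

lemma qpow_Suc_apply:
  "w + qpow U (Suc j) * w = (w + qpow U j * w) + U * (w + qpow U j * w)"
  by (simp add: algebra_simps)

lemma qpow_telescope:
  fixes U y :: "'a::ring"
  shows "U * y + qpow U j * (U * y) = (y + qpow U (Suc j) * y) - (y + qpow U j * y)"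
proof -
  have "qpow U j * (U * y) = U * (qpow U j * y)"
    by (simp only: mult.assoc[symmetric] qpow_commute)
  then show ?thesis
    by (simp add: algebra_simps)
qed

lemma qpow_left_ideal:
  assumes "U = c * s"
  shows "\<exists>b. qpow U j = b * s"
proof (induction j)
  case 0
  show ?case by (rule exI[of _ 0]) simp
next
  case (Suc j)
  then obtain b where "qpow U j = b * s" by blast
  then have "qpow U (Suc j) = (c + b + U * b) * s"
    by (simp add: assms distrib_right mult.assoc)
  then show ?case by blast
qed

lemma qpow_isometry:
  fixes U :: "'a::real_normed_algebra"
  assumes "\<And>w. norm (w + U * w) = norm w"
  shows "norm (w + qpow U j * w) = norm w"
  by (induction j) (simp_all only: qpow_Suc_apply assms, simp)

definition qmean :: "'a::real_algebra \<Rightarrow> nat \<Rightarrow> 'a" where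
  "qmean U n = (1 / real n) *\<^sub>R (\<Sum>j<n. qpow U j)"

lemma qmean_apply:
  fixes U w :: "'a::real_algebra"
  assumes "n \<ge> 1"
  shows "w + qmean U n * w = (1 / real n) *\<^sub>R (\<Sum>j<n. w + qpow U j * w)"
proof -
  have "(\<Sum>j<n. w + qpow U j * w) = real n *\<^sub>R w + (\<Sum>j<n. qpow U j) * w"
    by (simp add: sum.distrib sum_distrib_right sum_constant_scaleR)
  then show ?thesis
    using assms by (simp add: qmean_def scaleR_add_right)
qed

lemma qmean_left_ideal:
  assumes "U = c * s"
  shows "\<exists>b. qmean U n = b * s"
proof -
  obtain b where "\<And>j. qpow U j = b j * s"
    using qpow_left_ideal[OF assms] by metis
  then have "qmean U n = ((1 / real n) *\<^sub>R (\<Sum>j<n. b j)) * s"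
    by (simp add: qmean_def sum_distrib_right)
  then show ?thesis by blast
qed

lemma qmean_contraction:
  fixes U :: "'a::real_normed_algebra"
  assumes "\<And>w. norm (w + U * w) = norm w"
  shows "norm (w + qmean U n * w) \<le> norm w"
proof (cases "n = 0")
  case True
  then show ?thesis by (simp add: qmean_def)
next
  case False
  have "norm (\<Sum>j<n. w + qpow U j * w) \<le> real n * norm w"
    using norm_sum[of "\<lambda>j. w + qpow U j * w" "{..<n}"] by (simp add: qpow_isometry[OF assms])
  with False show ?thesis
    by (simp add: qmean_apply field_simps)
qed

text \<open>Mean ergodic estimate on the range of \<open>U\<close>: the sum telescopes.\<close>

lemma qmean_range_bound:
  fixes U y :: "'a::real_normed_algebra"
  assumes "\<And>w. norm (w + U * w) = norm w" and "n \<ge> 1"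
  shows "norm (U * y + qmean U n * (U * y)) \<le> 2 * norm y / real n"
proof -
  have "(\<Sum>j<n. U * y + qpow U j * (U * y)) = (y + qpow U n * y) - (y + qpow U 0 * y)"
    unfolding qpow_telescope by (rule sum_lessThan_telescope)
  also have "\<dots> = (y + qpow U n * y) - y"
    by simp
  also have "norm \<dots> \<le> 2 * norm y"
    using norm_triangle_ineq4[of "y + qpow U n * y" y] by (simp add: qpow_isometry[OF assms(1)])
  finally show ?thesis
    using assms(2) by (simp add: qmean_apply field_simps)
qed

section \<open>Approximate left units in a C*-algebra\<close>

locale cstar =
  fixes scA :: "complex \<Rightarrow> 'a::{real_normed_algebra,banach} \<Rightarrow> 'a"
    and st :: "'a \<Rightarrow> 'a"
  assumes cstar_algebra: "cstar_algebra scA st"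
begin

lemma sc_norm: "norm (scA c v) = cmod c * norm v"
  and sc_real: "scA (complex_of_real r) v = r *\<^sub>R v"
  and sc_mult: "scA (c * d) v = scA c (scA d v)"
  using cstar_algebra by (simp_all add: cstar_algebra_def complex_scaling_def)

lemma sc_mult_left: "scA c (a * b) = scA c a * b"
  and sc_mult_right: "scA c (a * b) = a * scA c b"
  and st_add: "st (a + b) = st a + st b"
  and st_sc: "st (scA c a) = scA (cnj c) (st a)"
  and st_st [simp]: "st (st a) = a"
  and st_mult: "st (a * b) = st b * st a"
  and cstar_identity: "norm (st a * a) = (norm a)\<^sup>2"
  using cstar_algebra unfolding cstar_algebra_def by blast+

lemma sc_one: "scA 1 v = v"
  using sc_real[of 1 v] by simp

lemma sc_minus_one: "scA (-1) v = - v"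
  using sc_real[of "-1" v] by simp

lemma sc_uminus: "scA (- c) v = - scA c v"
  using sc_mult[of "-1" c v] by (simp add: sc_minus_one)

lemma sc_scaleR: "scA c (r *\<^sub>R v) = r *\<^sub>R scA c v"
  by (metis mult.commute sc_mult sc_real)

lemma st_zero [simp]: "st 0 = 0"
  using st_add[of 0 0] by simp

lemma st_minus: "st (- a) = - st a"
  using st_add[of a "- a"] by (metis add.right_inverse minus_unique st_zero)

lemma st_scaleR: "st (r *\<^sub>R a) = r *\<^sub>R st a"
  using st_sc[of "complex_of_real r" a] by (simp add: sc_real)

lemma norm_st [simp]: "norm (st a) = norm a"
proof -
  have le: "norm b \<le> norm (st b)" for b
  proof (cases "b = 0")
    case False
    have "(norm b)\<^sup>2 \<le> norm (st b) * norm b"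
      using cstar_identity[of b] norm_mult_ineq[of "st b" b] by simp
    with False show ?thesis by (simp add: power2_eq_square)
  qed simp
  show ?thesis
    using le[of a] le[of "st a"] by simp
qed

lemma cstar_identity': "norm (a * st a) = (norm a)\<^sup>2"
  using cstar_identity[of "st a"] by simp

text \<open>For skew-adjoint \<open>a\<close>, \<open>V = U\<^sup>*\<close> solves \<open>V = -2a - a V\<close>, so \<open>W = V + U + V U\<close>,
  which encodes \<open>(1 + U)\<^sup>* (1 + U) - 1\<close>, satisfies \<open>a W = -W\<close> and hence vanishes.\<close>

lemma cayley_isometry:
  assumes skew: "st a = - a" and "norm a < 1" and U: "U = (a + a) + a * U"
  shows "norm (w + U * w) = norm w"
proof -
  have Ua: "U * a = a * U"
    by (rule affine_fixpoint_commute[OF assms(2) _ U]) (simp add: algebra_simps)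
  define V where "V = st U"
  have "V = st ((a + a) + a * U)"
    unfolding V_def using U by (rule arg_cong)
  also have "\<dots> = - (a + a) - a * V"
    by (simp add: st_add st_mult st_minus skew V_def Ua[symmetric])
  finally have V: "V = - (a + a) - a * V" .
  define W where "W = V + U + V * U"
  have "norm W = norm (a * W)"
    by (simp only: W_def cayley_product_identity[OF U V] norm_minus_cancel)
  also have "\<dots> \<le> norm a * norm W"
    by (rule norm_mult_ineq)
  finally have "norm W \<le> norm a * norm W" .
  with \<open>norm a < 1\<close> have "W = 0"
    by (metis mult_le_cancel_right1 norm_le_zero_iff not_le)
  have "st (w + U * w) * (w + U * w) = st w * w + st w * (W * w)"
    by (simp add: st_add st_mult V_def[symmetric] W_def algebra_simps)
  with \<open>W = 0\<close> have "st (w + U * w) * (w + U * w) = st w * w"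
    by simp
  then have "(norm (w + U * w))\<^sup>2 = (norm w)\<^sup>2"
    by (metis cstar_identity)
  then show ?thesis
    by (simp add: power2_eq_iff_nonneg)
qed

lemma contraction_norm_sq_le:
  assumes contr: "\<And>w. norm (w + Q * w) \<le> norm w"
  shows "(norm (x + Q * x))\<^sup>2 \<le> norm (x * st x + Q * (x * st x))"
proof -
  define L where "L w = w + Q * w" for w
  have L_mult: "L (w * r) = L w * r" for w r
    by (simp add: L_def distrib_right mult.assoc)
  have "L x * st (L x) = L (x * st (L x))"
    by (rule L_mult[symmetric])
  also have "x * st (L x) = st (L x * st x)"
    by (simp add: st_mult)
  also have "L x * st x = L (x * st x)"
    by (rule L_mult[symmetric])
  finally have "L x * st (L x) = L (st (L (x * st x)))" .
  then have "(norm (L x))\<^sup>2 \<le> norm (st (L (x * st x)))"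
    using contr by (metis L_def cstar_identity')
  then show ?thesis
    by (simp add: L_def)
qed

lemma skew_approx_unit:
  assumes skew: "st a = - a" and na: "norm a \<le> 1/2" and a_ideal: "a = c * s" and n: "n \<ge> 1"
  shows "\<exists>b. (\<forall>w. norm (w + (b * s) * w) \<le> norm w) \<and>
             norm (a * a + (b * s) * (a * a)) \<le> 3 / (4 * real n)"
proof -
  have "norm a < 1"
    using na by simp
  then obtain U where U: "U = (a + a) + a * U"
    using affine_fixpoint_ex1 by blast
  have Ua: "U * a = a * U"
    by (rule affine_fixpoint_commute[OF \<open>norm a < 1\<close> _ U]) (simp add: algebra_simps)
  have iso: "\<And>w. norm (w + U * w) = norm w"
    by (rule cayley_isometry[OF skew \<open>norm a < 1\<close> U])
  have "U = (a + a) + U * a"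
    unfolding Ua by (fact U)
  also have "\<dots> = (c + c + U * c) * s"
    by (simp add: a_ideal distrib_right mult.assoc)
  finally obtain b where b: "qmean U n = b * s"
    using qmean_left_ideal by blast
  have "norm (a - a * a) \<le> norm a + norm a * norm a"
    using norm_triangle_ineq4[of a "a * a"] norm_mult_ineq[of a a] by linarith
  also have "\<dots> \<le> 3/4"
    using na mult_mono[OF na na] by simp
  finally have small: "norm (a - a * a) \<le> 3/4" .
  define L where "L w = w + qmean U n * w" for w
  have "L ((a + a) * a) = 2 *\<^sub>R L (a * a)"
    by (simp add: L_def distrib_left distrib_right scaleR_2)
  then have "2 * norm (L (a * a)) = norm (L (U * (a - a * a)))"
    by (simp add: cayley_range[OF \<open>norm a < 1\<close> U])
  also have "\<dots> \<le> 2 * norm (a - a * a) / real n"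
    unfolding L_def by (rule qmean_range_bound[OF iso n])
  also have "\<dots> \<le> 2 * (3/4) / real n"
    by (rule divide_right_mono) (use small in simp_all)
  finally have "norm (L (a * a)) \<le> 3 / (4 * real n)"
    by simp
  moreover have "norm (w + (b * s) * w) \<le> norm w" for w
    unfolding b[symmetric] by (rule qmean_contraction[OF iso])
  ultimately show ?thesis
    by (auto simp: L_def b)
qed

lemma selfadjoint_approx_unit:
  assumes st_h: "st h = h" and h_ideal: "h = c * s" and n: "n \<ge> 1"
  shows "\<exists>b. (\<forall>w. norm (w + (b * s) * w) \<le> norm w) \<and>
             norm (h * h + (b * s) * (h * h)) \<le> 3 * (norm h)\<^sup>2 / real n"
proof (cases "h = 0")
  case True
  then show ?thesis by (intro exI[of _ 0]) simp
next
  case False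
  define k where "k = 1 / (2 * norm h)"
  with False have "k > 0"
    by simp
  define a where "a = scA \<i> (k *\<^sub>R h)"
  have "st a = - a"
    by (simp add: a_def st_sc st_scaleR st_h sc_uminus)
  moreover have "norm a = 1/2"
    using False by (simp add: a_def sc_norm k_def)
  moreover have "a = scA \<i> (k *\<^sub>R c) * s"
    by (simp add: a_def h_ideal flip: sc_mult_left)
  ultimately obtain b where contr: "\<And>w. norm (w + (b * s) * w) \<le> norm w"
    and bound_aa: "norm (a * a + (b * s) * (a * a)) \<le> 3 / (4 * real n)"
    using skew_approx_unit[of a _ s n] n by auto
  define P where "P = b * s"
  have "a * a = - (k * k) *\<^sub>R (h * h)"
    by (simp add: a_def sc_scaleR sc_minus_one flip: sc_mult_left sc_mult_right sc_mult)
  then have "h * h + P * (h * h) = - (1 / (k * k)) *\<^sub>R (a * a + P * (a * a))"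
    using \<open>k > 0\<close> by (simp add: algebra_simps)
  then have "norm (h * h + P * (h * h)) = (1 / (k * k)) * norm (a * a + P * (a * a))"
    using \<open>k > 0\<close> by simp
  also have "\<dots> \<le> (1 / (k * k)) * (3 / (4 * real n))"
    using bound_aa \<open>k > 0\<close> by (intro mult_left_mono) (simp_all add: P_def)
  also have "\<dots> = 3 * (norm h)\<^sup>2 / real n"
    using False by (simp add: k_def field_simps power2_eq_square)
  finally show ?thesis
    using contr unfolding P_def by blast
qed

text \<open>\<open>contraction_norm_sq_le\<close> passes the bound from \<open>(z z\<^sup>*)\<^sup>2\<close> to \<open>z z\<^sup>*\<close> and then to
  \<open>z\<close>, which is where the fourth power comes from.\<close>

lemma approx_left_unit_rate:
  assumes "n \<ge> 1"
  shows "\<exists>b. (\<forall>w. norm (w + (b * st z) * w) \<le> norm w) \<and>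
             (norm (z + (b * st z) * z))^4 \<le> 3 * (norm z)^4 / real n"
proof -
  define m where "m = z * st z"
  have st_m: "st m = m"
    by (simp add: m_def st_mult)
  obtain b where contr: "\<And>w. norm (w + (b * st z) * w) \<le> norm w"
    and bound_mm: "norm (m * m + (b * st z) * (m * m)) \<le> 3 * (norm m)\<^sup>2 / real n"
    using selfadjoint_approx_unit[OF st_m m_def assms] by blast
  define P where "P = b * st z"
  have "(norm (m + P * m))\<^sup>2 \<le> 3 * (norm m)\<^sup>2 / real n"
    using contraction_norm_sq_le[of P m] contr bound_mm by (simp add: P_def st_m)
  moreover have "(norm (z + P * z))\<^sup>2 \<le> norm (m + P * m)"
    using contraction_norm_sq_le[of P z] contr by (simp add: P_def m_def)
  moreover have "norm m = (norm z)\<^sup>2"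
    by (simp add: m_def cstar_identity')
  ultimately have "(norm (z + P * z))^4 \<le> 3 * (norm z)^4 / real n"
    using power_mono[of "(norm (z + P * z))\<^sup>2" "norm (m + P * m)" 2] by simp
  with contr show ?thesis
    unfolding P_def by blast
qed

lemma approx_left_unit:
  assumes "\<epsilon> > 0"
  shows "\<exists>b. (\<forall>w. norm (w + (b * st z) * w) \<le> norm w) \<and> norm (z + (b * st z) * z) \<le> \<epsilon>"
proof -
  obtain n :: nat where n: "3 * (norm z)^4 / \<epsilon>^4 < real n"
    using reals_Archimedean2 by blast
  moreover have "0 \<le> 3 * (norm z)^4 / \<epsilon>^4"
    using assms by simp
  ultimately have "n \<ge> 1"
    by (cases n) auto
  obtain b where contr: "\<forall>w. norm (w + (b * st z) * w) \<le> norm w"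
    and rate: "(norm (z + (b * st z) * z))^4 \<le> 3 * (norm z)^4 / real n"
    using approx_left_unit_rate[OF \<open>n \<ge> 1\<close>] by blast
  have "3 * (norm z)^4 / real n \<le> \<epsilon>^4"
    using n assms \<open>n \<ge> 1\<close> by (simp add: field_simps)
  with rate have "(norm (z + (b * st z) * z))^4 \<le> \<epsilon>^4"
    by linarith
  then have "norm (z + (b * st z) * z) \<le> \<epsilon>"
    using assms power_mono_iff[of "norm (z + (b * st z) * z)" \<epsilon> 4] by simp
  with contr show ?thesis
    by blast
qed

end

section \<open>Approximation by a single \<open>\<theta>\<close>\<close>

lemma contraction_near_multiple:
  fixes P z \<alpha> v :: "'a::real_normed_algebra"
  assumes "\<And>w. norm (w + P * w) \<le> norm w"
    and "norm (z * \<alpha> - v) \<le> \<delta>" and "norm \<alpha> \<le> K" and "norm (z + P * z) \<le> \<epsilon>"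
  shows "norm (v + P * v) \<le> \<delta> + \<epsilon> * K"
proof -
  have "0 \<le> \<epsilon>"
    using assms(4) by (rule order_trans[OF norm_ge_zero])
  have "v + P * v = ((v - z * \<alpha>) + P * (v - z * \<alpha>)) + (z + P * z) * \<alpha>"
    by (simp add: algebra_simps)
  also have "norm \<dots> \<le> norm ((v - z * \<alpha>) + P * (v - z * \<alpha>)) + norm ((z + P * z) * \<alpha>)"
    by (rule norm_triangle_ineq)
  also have "\<dots> \<le> norm (z * \<alpha> - v) + \<epsilon> * K"
  proof (rule add_mono)
    show "norm ((v - z * \<alpha>) + P * (v - z * \<alpha>)) \<le> norm (z * \<alpha> - v)"
      using assms(1)[of "v - z * \<alpha>"] by (simp add: norm_minus_commute)
    show "norm ((z + P * z) * \<alpha>) \<le> \<epsilon> * K"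
      using norm_mult_ineq mult_mono[OF assms(4,3) \<open>0 \<le> \<epsilon>\<close> norm_ge_zero] by (rule order_trans)
  qed
  also have "\<dots> \<le> \<delta> + \<epsilon> * K"
    using assms(2) by simp
  finally show ?thesis .
qed

lemma onorm_le_unit_ball:
  assumes "linear f" and "0 \<le> b" and "\<And>x. norm x \<le> 1 \<Longrightarrow> norm (f x) \<le> b"
  shows "onorm f \<le> b"
proof (rule onorm_bound[OF assms(2)])
  fix x
  show "norm (f x) \<le> b * norm x"
  proof (cases "x = 0")
    case True
    then show ?thesis using linear_0[OF assms(1)] by simp
  next
    case False
    have "f x = norm x *\<^sub>R f ((1 / norm x) *\<^sub>R x)"
      using False by (simp add: linear_scale[OF assms(1)])
    then show ?thesis
      using assms(3)[of "(1 / norm x) *\<^sub>R x"] False by (simp add: mult.commute mult_left_mono)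
  qed
qed

lemma near_multiples_if_not_separated:
  fixes z :: "'a::real_normed_algebra" and F :: "'m::real_normed_vector \<Rightarrow> 'a"
  assumes "\<not> (\<exists>x. norm x \<le> 1 \<and> (\<forall>\<alpha>. norm \<alpha> \<le> K \<longrightarrow> norm (z * \<alpha> - F x) > \<delta>) \<and> norm (F x) > \<delta>)"
    and "K \<ge> 0" and "norm x \<le> 1"
  shows "\<exists>\<alpha>. norm \<alpha> \<le> K \<and> norm (z * \<alpha> - F x) \<le> \<delta>"
proof (cases "norm (F x) > \<delta>")
  case True
  with assms(1,3) obtain \<alpha> where "norm \<alpha> \<le> K" and "\<not> norm (z * \<alpha> - F x) > \<delta>"
    by blast
  then show ?thesis
    by (auto simp: not_less)
next
  case False
  then show ?thesis
    using assms(2) by (intro exI[of _ 0]) simp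
qed

context cstar
begin

lemma theta_approx_of_near_multiples:
  assumes "bounded_linear F" and adjoint: "\<And>w x. ip (G w) x = st w * F x"
    and near: "\<And>x. norm x \<le> 1 \<Longrightarrow> \<exists>\<alpha>. norm \<alpha> \<le> K \<and> norm (z * \<alpha> - F x) \<le> \<delta>"
    and "K > 0" and "\<epsilon> > 0"
  shows "\<exists>a. onorm (\<lambda>x. F x - theta ip a (G z) x) \<le> \<delta> + \<epsilon>"
proof -
  have "\<epsilon> / K > 0"
    using assms(5,4) by (rule divide_pos_pos)
  with approx_left_unit[where z = z] obtain b where contr: "\<And>w. norm (w + (b * st z) * w) \<le> norm w"
    and approx: "norm (z + (b * st z) * z) \<le> \<epsilon> / K"
    by blast
  have theta_eq: "F x - theta ip (- b) (G z) x = F x + (b * st z) * F x" for x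
    by (simp add: theta_def adjoint mult.assoc)
  have "linear (\<lambda>x. F x - theta ip (- b) (G z) x)"
    unfolding theta_eq
    using bounded_linear_add[OF assms(1) bounded_linear_const_mult[OF assms(1)]]
    by (rule bounded_linear.linear)
  moreover have "0 \<le> \<delta> + \<epsilon>"
  proof -
    obtain \<alpha> where "norm (z * \<alpha> - F 0) \<le> \<delta>"
      using near[of 0] by force
    then have "0 \<le> \<delta>"
      by (rule order_trans[OF norm_ge_zero])
    with \<open>\<epsilon> > 0\<close> show ?thesis
      by simp
  qed
  moreover have "norm (F x - theta ip (- b) (G z) x) \<le> \<delta> + \<epsilon>" if x: "norm x \<le> 1" for x
  proof -
    obtain \<alpha> where "norm \<alpha> \<le> K" and "norm (z * \<alpha> - F x) \<le> \<delta>"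
      using near[OF x] by blast
    from contraction_near_multiple[OF contr this(2,1) approx] \<open>K > 0\<close> show ?thesis
      by (simp add: theta_eq)
  qed
  ultimately have "onorm (\<lambda>x. F x - theta ip (- b) (G z) x) \<le> \<delta> + \<epsilon>"
    by (rule onorm_le_unit_ball)
  then show ?thesis
    by (rule exI)
qed

lemma A_compact_if_theta_approx:
  assumes "\<And>e. e > 0 \<Longrightarrow> \<exists>a y. onorm (\<lambda>x. F x - theta ip a y x) < e"
  shows "A_compact scA ip F"
  unfolding A_compact_def
proof (intro allI impI)
  fix e :: real
  assume "e > 0"
  then obtain a y where approx: "onorm (\<lambda>x. F x - theta ip a y x) < e"
    using assms by blast
  show "\<exists>(n::nat) c a y. onorm (\<lambda>x. F x - (\<Sum>i<n. scA (c i) (theta ip (a i) (y i) x))) < e"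
    by (intro exI[of _ 1] exI[of _ "\<lambda>_. 1"] exI[of _ "\<lambda>_. a"] exI[of _ "\<lambda>_. y"])
      (simp add: sc_one approx)
qed

end

lemma adjointable_to_algE:
  assumes "hilbert_cstar_module scA st scM act ip" and "adjointable_to_alg st ip F"
  obtains G where "\<And>w x. ip (G w) x = st w * F x"
proof -
  interpret cstar scA st
    using assms(1) unfolding hilbert_cstar_module_def by unfold_locales blast
  obtain G where G: "\<And>x a. alg_ip st (F x) a = ip x (G a)"
    using assms(2) unfolding adjointable_to_alg_def by blast
  have "ip (G w) x = st w * F x" for w x
  proof -
    have "ip (G w) x = st (ip x (G w))"
      using assms(1) unfolding hilbert_cstar_module_def by blast
    then show ?thesis
      by (simp add: G[symmetric] alg_ip_def st_mult)
  qed
  then show ?thesis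
    by (rule that)
qed

theorem lemma3p2:
  fixes scA :: "complex \<Rightarrow> 'a::{real_normed_algebra,banach} \<Rightarrow> 'a"
    and st :: "'a \<Rightarrow> 'a"
    and scM :: "complex \<Rightarrow> 'm::{real_normed_vector,banach} \<Rightarrow> 'm"
    and act :: "'m \<Rightarrow> 'a \<Rightarrow> 'm"
    and ip :: "'m \<Rightarrow> 'm \<Rightarrow> 'a"
    and F :: "'m \<Rightarrow> 'a"
    and K :: real
  assumes "hilbert_cstar_module scA st scM act ip"
    and "bounded_linear F"
    and "adjointable_to_alg st ip F"
    and "\<not> A_compact scA ip F"
    and "K > 0"
  shows "\<exists>\<delta>>0. \<forall>z::'a. \<exists>x::'m. norm x \<le> 1 \<and>
           (\<forall>\<alpha>::'a. norm \<alpha> \<le> K \<longrightarrow> norm (z * \<alpha> - F x) > \<delta>) \<and>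
           norm (F x) > \<delta>"
proof (rule ccontr)
  assume contra: "\<not> ?thesis"
  interpret cstar scA st
    using assms(1) unfolding hilbert_cstar_module_def by unfold_locales blast
  obtain G where adjoint: "\<And>w x. ip (G w) x = st w * F x"
    using adjointable_to_algE[OF assms(1,3)] by blast
  have "A_compact scA ip F"
  proof (rule A_compact_if_theta_approx)
    fix e :: real
    assume "e > 0"
    then have "e / 3 > 0"
      by simp
    with contra obtain z where sep: "\<not> (\<exists>x. norm x \<le> 1 \<and>
        (\<forall>\<alpha>. norm \<alpha> \<le> K \<longrightarrow> norm (z * \<alpha> - F x) > e / 3) \<and> norm (F x) > e / 3)"
      by blast
    obtain a where "onorm (\<lambda>x. F x - theta ip a (G z) x) \<le> e / 3 + e / 3"
      using theta_approx_of_near_multiples[OF assms(2) adjoint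
          near_multiples_if_not_separated[OF sep less_imp_le[OF \<open>K > 0\<close>]] \<open>K > 0\<close> \<open>e / 3 > 0\<close>]
      by blast
    with \<open>e > 0\<close> have "onorm (\<lambda>x. F x - theta ip a (G z) x) < e"
      by linarith
    then show "\<exists>a y. onorm (\<lambda>x. F x - theta ip a y x) < e"
      by blast
  qed
  with assms(4) show False
    by contradiction
qed

end
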